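(* Let $H$ be a compact Lie group with a fixed maximal torus, so that every finite-dimensional complex representation of $H$ decomposes into weight spaces. For a representation $M$, write $M_{0}$ for its zero-weight subspace. Then: (i) for every finite-dimensional complex representation $N$ of $H$, with dual (conjugate) representation $\bar N$, one has $\dim\bigl((\bar N\otimes N)_{0}\bigr)\ge \dim N$; (ii) if $N$ is a quaternionic representation of $H$ (i.e. $N$ admits a nondegenerate $H$-invariant antisymmetric bilinear form), then $\dim\bigl((\Lambda^2 N)_{0}\bigr)\ge \tfrac12\dim N$; (iii) if $N$ is a real representation of $H$ (i.e. $N$ admits a nondegenerate $H$-invariant symmetric bilinear form), then $\dim\bigl((S^2 N)_{0}\bigr)\ge \tfrac12\dim N$.
   Context: Weights are taken with respect to the chosen maximal torus; the representations $N$ need not be irreducible. $\Lambda^2$ and $S^2$ denote the antisymmetric and symmetric tensor squares. *)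

theory Defs
  imports "HOL-Analysis.Analysis" "HOL-Algebra.Group"
begin

text \<open>The torus (S^1)^r, with rank r = CARD('r), realised as unit-modulus tuples
  with pointwise multiplication.\<close>
definition torus :: "('r::finite \<Rightarrow> complex) set" where
  "torus = {t. \<forall>i. norm (t i) = 1}"

definition character :: "('r::finite \<Rightarrow> int) \<Rightarrow> ('r \<Rightarrow> complex) \<Rightarrow> complex" where
  "character lam t = (\<Prod>i\<in>UNIV. t i powi lam i)"

definition diagm :: "('n::finite \<Rightarrow> complex) \<Rightarrow> complex^'n^'n" where
  "diagm d = (\<chi> i j. if i = j then d i else 0)"

definition torus_in_group :: "('h, 'm) monoid_scheme \<Rightarrow> (('r::finite \<Rightarrow> complex) \<Rightarrow> 'h) \<Rightarrow> bool" where
  "torus_in_group G tor \<longleftrightarrow>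
     tor \<in> torus \<rightarrow> carrier G \<and> inj_on tor torus \<and>
     (\<forall>s\<in>torus. \<forall>t\<in>torus. tor (\<lambda>i. s i * t i) = tor s \<otimes>\<^bsub>G\<^esub> tor t)"

definition is_rep :: "('h, 'm) monoid_scheme \<Rightarrow> ('h \<Rightarrow> complex^'n^'n) \<Rightarrow> bool" where
  "is_rep G rho \<longleftrightarrow>
     (\<forall>g\<in>carrier G. invertible (rho g)) \<and>
     (\<forall>g\<in>carrier G. \<forall>h\<in>carrier G. rho (g \<otimes>\<^bsub>G\<^esub> h) = rho g ** rho h)"

definition weight_decomposable ::
  "(('r::finite \<Rightarrow> complex) \<Rightarrow> 'h) \<Rightarrow> ('h \<Rightarrow> complex^'n::finite^'n) \<Rightarrow> bool" where
  "weight_decomposable tor rho \<longleftrightarrow>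
     (\<exists>P (wt :: 'n \<Rightarrow> 'r \<Rightarrow> int). invertible P \<and>
        (\<forall>t\<in>torus. rho (tor t) = P ** diagm (\<lambda>k. character (wt k) t) ** matrix_inv P))"

definition zero_weight_space ::
  "(('r::finite \<Rightarrow> complex) \<Rightarrow> 'h) \<Rightarrow> ('h \<Rightarrow> 'v \<Rightarrow> 'v) \<Rightarrow> 'v set \<Rightarrow> 'v set" where
  "zero_weight_space tor act V = {v\<in>V. \<forall>t\<in>torus. act (tor t) v = v}"

text \<open>N \<otimes> N realised as complex^('n \<times> 'n); A \<otimes> B acts on it (Kronecker action).\<close>
definition tensor_act :: "complex^'n^'n \<Rightarrow> complex^'n^'n \<Rightarrow> complex^('n::finite \<times> 'n) \<Rightarrow> complex^('n \<times> 'n)" where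
  "tensor_act A B X = (\<chi> p. \<Sum>k\<in>UNIV. \<Sum>l\<in>UNIV. A$(fst p)$k * B$(snd p)$l * X$(k,l))"

definition conj_mat :: "complex^'n^'n \<Rightarrow> complex^'n^'n" where
  "conj_mat A = (\<chi> i j. cnj (A$i$j))"

text \<open>Antisymmetric tensors (Lambda^2 N) and symmetric tensors (S^2 N) inside N \<otimes> N.\<close>
definition alt_tensors :: "(complex^('n::finite \<times> 'n)) set" where
  "alt_tensors = {X. \<forall>i j. X$(i,j) = - X$(j,i)}"

definition sym_tensors :: "(complex^('n::finite \<times> 'n)) set" where
  "sym_tensors = {X. \<forall>i j. X$(i,j) = X$(j,i)}"

text \<open>Invariant nondegenerate bilinear forms beta(v,w) = v^T B w.\<close>
definition quaternionic_rep :: "('h, 'm) monoid_scheme \<Rightarrow> ('h \<Rightarrow> complex^'n::finite^'n) \<Rightarrow> bool" where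
  "quaternionic_rep G rho \<longleftrightarrow> (\<exists>B. invertible B \<and> transpose B = - B \<and>
      (\<forall>g\<in>carrier G. transpose (rho g) ** B ** rho g = B))"

definition real_rep :: "('h, 'm) monoid_scheme \<Rightarrow> ('h \<Rightarrow> complex^'n::finite^'n) \<Rightarrow> bool" where
  "real_rep G rho \<longleftrightarrow> (\<exists>B. invertible B \<and> transpose B = B \<and>
      (\<forall>g\<in>carrier G. transpose (rho g) ** B ** rho g = B))"

end

theory Submission
  imports Defs
begin

text \<open>On the torus write rho(t) = P diag(chi_1(t), ..., chi_n(t)) P^-1. For (i), the n tensors
  (conj P \<otimes> P) e_kk have weight conj(chi_k) chi_k = 1 and are independent. For (ii) and (iii),
  the invariant form in the adapted basis, C = P^T B P, satisfies chi_k chi_l C_kl = C_kl, so every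
  nonzero entry of C has weight zero. Since C is invertible, every index k has a partner f k with
  C_(k, f k) \<noteq> 0, and the part of C supported on {(k, f k), (f k, k)} is an (anti)symmetric
  tensor of weight zero. These tensors have disjoint supports and each arises from at most two
  indices, so at least n/2 of them are independent.\<close>

lemma tensor_act_nth:
  "tensor_act A B X $ p = (\<Sum>q\<in>UNIV. A$fst p$fst q * B$snd p$snd q * X$q)"
  unfolding tensor_act_def vec_lambda_beta
  by (simp add: sum.cartesian_product split_def)

lemma matrix_mult_nth_mult_eq_sum_pairs:
  "(A ** A')$i$k * (B ** B')$j$l = (\<Sum>q\<in>UNIV. A$i$fst q * A'$fst q$k * (B$j$snd q * B'$snd q$l))"
  by (simp add: matrix_matrix_mult_def sum_product sum.cartesian_product split_def)

lemma tensor_act_tensor_act: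
  "tensor_act A B (tensor_act A' B' X) = tensor_act (A ** A') (B ** B') X"
proof -
  have "tensor_act A B (tensor_act A' B' X) $ p = tensor_act (A ** A') (B ** B') X $ p" for p
  proof -
    have "tensor_act A B (tensor_act A' B' X) $ p
        = (\<Sum>q\<in>UNIV. \<Sum>q'\<in>UNIV.
             A$fst p$fst q * B$snd p$snd q * (A'$fst q$fst q' * B'$snd q$snd q' * X$q'))"
      unfolding tensor_act_nth by (simp only: sum_distrib_left)
    also have "\<dots> = (\<Sum>q'\<in>UNIV. \<Sum>q\<in>UNIV.
             A$fst p$fst q * A'$fst q$fst q' * (B$snd p$snd q * B'$snd q$snd q') * X$q')"
      by (subst sum.swap) (simp only: mult_ac)
    also have "\<dots> = tensor_act (A ** A') (B ** B') X $ p"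
      by (simp only: tensor_act_nth matrix_mult_nth_mult_eq_sum_pairs sum_distrib_right)
    finally show ?thesis .
  qed
  then show ?thesis by (simp add: vec_eq_iff)
qed

lemma linear_tensor_act: "Vector_Spaces.linear (*s) (*s) (tensor_act A B)"
  unfolding Vector_Spaces.linear_iff
  by (simp add: vec.vector_space_axioms tensor_act_def vec_eq_iff distrib_left sum.distrib
      sum_distrib_left mult_ac)

lemma tensor_act_diagm:
  "tensor_act (diagm a) (diagm b) Y $ (k, l) = a k * b l * Y$(k, l)"
proof -
  have "diagm a$k$fst q * diagm b$l$snd q * Y$q = (if q = (k, l) then a k * b l * Y$(k, l) else 0)" for q
    by (auto simp: diagm_def)
  then show ?thesis by (simp add: tensor_act_nth)
qed

lemma tensor_act_diagm_fixed:
  assumes "\<And>k l. Y$(k, l) \<noteq> 0 \<Longrightarrow> a k * b l = 1"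
  shows "tensor_act (diagm a) (diagm b) Y = Y"
  using assms by (auto simp: vec_eq_iff tensor_act_diagm)

lemma mat_1_eq_diagm: "mat 1 = diagm (\<lambda>_. 1)"
  by (simp add: mat_def diagm_def vec_eq_iff)

lemma tensor_act_mat_1: "tensor_act (mat 1) (mat 1) X = X"
  by (simp add: mat_1_eq_diagm tensor_act_diagm_fixed)

lemma tensor_act_conjugate_fixed:
  assumes "Q ** P = mat 1" and "Q' ** P' = mat 1" and "tensor_act A A' Y = Y"
  shows "tensor_act (P ** A ** Q) (P' ** A' ** Q') (tensor_act P P' Y) = tensor_act P P' Y"
proof -
  have "tensor_act (P ** A ** Q) (P' ** A' ** Q') (tensor_act P P' Y)
      = tensor_act P P' (tensor_act A A' (tensor_act (Q ** P) (Q' ** P') Y))"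
    by (simp add: tensor_act_tensor_act matrix_mul_assoc)
  then show ?thesis by (simp add: assms tensor_act_mat_1)
qed

lemma tensor_act_swap:
  assumes "\<And>i j. Y$(i, j) = s * Y$(j, i)"
  shows "tensor_act A A Y $ (i, j) = s * tensor_act A A Y $ (j, i)"
proof -
  have "tensor_act A A Y $ (i, j) = (\<Sum>k\<in>UNIV. \<Sum>l\<in>UNIV. A$i$k * A$j$l * (s * Y$(l, k)))"
    unfolding tensor_act_def vec_lambda_beta fst_conv snd_conv
    by (intro sum.cong refl) (subst assms, rule refl)
  also have "\<dots> = (\<Sum>l\<in>UNIV. \<Sum>k\<in>UNIV. A$i$k * A$j$l * (s * Y$(l, k)))"
    by (rule sum.swap)
  also have "\<dots> = s * tensor_act A A Y $ (j, i)"
    by (simp add: tensor_act_def sum_distrib_left mult_ac)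
  finally show ?thesis .
qed

lemma independent_disjoint_supports:
  fixes S :: "('a::field ^ 'i) set"
  assumes "0 \<notin> S"
    and "\<And>x y p. x \<in> S \<Longrightarrow> y \<in> S \<Longrightarrow> x$p \<noteq> 0 \<Longrightarrow> y$p \<noteq> 0 \<Longrightarrow> x = y"
  shows "vec.independent S"
  unfolding vec.dependent_def
proof safe
  fix x assume x: "x \<in> S" and "x \<in> vec.span (S - {x})"
  obtain p where p: "x$p \<noteq> 0" using x assms(1) by (metis vec_eq_iff zero_index)
  have "S - {x} \<subseteq> {y. y$p = 0}"
    using assms(2) x p by blast
  moreover have "vec.subspace {y. y$p = 0}"
    by (simp add: vec.subspace_def)
  ultimately have "vec.span (S - {x}) \<subseteq> {y. y$p = 0}"
    by (rule vec.span_minimal)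
  then show False using \<open>x \<in> vec.span (S - {x})\<close> p by blast
qed

lemma card_range_le_dim_zero_weight_space:
  fixes tor :: "('r::finite \<Rightarrow> complex) \<Rightarrow> 'h"
    and rho rho' :: "'h \<Rightarrow> complex^'n::finite^'n"
    and Y :: "'i \<Rightarrow> complex^('n \<times> 'n)"
  assumes QP: "Q ** P = mat 1" and QP': "Q' ** P' = mat 1"
    and rho: "\<And>t. t \<in> torus \<Longrightarrow> rho (tor t) = P ** diagm (a t) ** Q"
    and rho': "\<And>t. t \<in> torus \<Longrightarrow> rho' (tor t) = P' ** diagm (b t) ** Q'"
    and weight_zero: "\<And>i k l t. t \<in> torus \<Longrightarrow> Y i $ (k, l) \<noteq> 0 \<Longrightarrow> a t k * b t l = 1"
    and nonzero: "\<And>i. Y i \<noteq> 0"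
    and disjoint: "\<And>i j p. Y i $ p \<noteq> 0 \<Longrightarrow> Y j $ p \<noteq> 0 \<Longrightarrow> Y i = Y j"
    and in_V: "\<And>i. tensor_act P P' (Y i) \<in> V"
  shows "card (range Y) \<le> vec.dim (zero_weight_space tor (\<lambda>g. tensor_act (rho g) (rho' g)) V)"
proof -
  let ?T = "tensor_act P P'"
  have inj: "inj ?T"
    by (rule inj_on_inverseI[where g = "tensor_act Q Q'"])
      (simp add: tensor_act_tensor_act QP QP' tensor_act_mat_1)
  have "vec.independent (range Y)"
    by (rule independent_disjoint_supports) (use nonzero disjoint in auto)
  then have "vec.independent (?T ` range Y)"
    using inj by (intro vec.linear_independent_injective_image linear_tensor_act)
      (auto intro: inj_on_subset)
  moreover have "?T ` range Y \<subseteq> zero_weight_space tor (\<lambda>g. tensor_act (rho g) (rho' g)) V"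
    unfolding zero_weight_space_def using in_V
    by (auto simp: rho rho' intro!: tensor_act_conjugate_fixed[OF QP QP'] tensor_act_diagm_fixed
        weight_zero)
  ultimately have
    "card (?T ` range Y) \<le> vec.dim (zero_weight_space tor (\<lambda>g. tensor_act (rho g) (rho' g)) V)"
    by (simp add: vec.independent_card_le_dim)
  moreover have "card (?T ` range Y) = card (range Y)"
    using inj by (simp add: card_image inj_on_subset)
  ultimately show ?thesis by simp
qed

lemma conj_mat_mult: "conj_mat (A ** B) = conj_mat A ** conj_mat B"
  by (simp add: conj_mat_def matrix_matrix_mult_def vec_eq_iff)

lemma conj_mat_diagm: "conj_mat (diagm d) = diagm (\<lambda>k. cnj (d k))"
  by (simp add: conj_mat_def diagm_def vec_eq_iff)

lemma conj_mat_mat_1: "conj_mat (mat 1) = mat 1"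
  by (simp add: mat_1_eq_diagm conj_mat_diagm)

lemma card_le_dim_zero_weight_conj_tensor:
  fixes tor :: "('r::finite \<Rightarrow> complex) \<Rightarrow> 'h" and rho :: "'h \<Rightarrow> complex^'n::finite^'n"
    and P Q :: "complex^'n^'n"
  assumes QP: "Q ** P = mat 1"
    and rho: "\<And>t. t \<in> torus \<Longrightarrow> rho (tor t) = P ** diagm (d t) ** Q"
    and unitary: "\<And>t k. t \<in> torus \<Longrightarrow> norm (d t k) = 1"
  shows "CARD('n) \<le> vec.dim (zero_weight_space tor (\<lambda>g. tensor_act (conj_mat (rho g)) (rho g)) UNIV)"
proof -
  define Y where "Y i = axis (i, i) (1::complex)" for i :: 'n
  have conj_QP: "conj_mat Q ** conj_mat P = mat 1"
    using QP by (simp flip: conj_mat_mult add: conj_mat_mat_1)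
  have conj_rho: "conj_mat (rho (tor t)) = conj_mat P ** diagm (\<lambda>k. cnj (d t k)) ** conj_mat Q"
    if "t \<in> torus" for t
    using rho[OF that] by (simp add: conj_mat_mult conj_mat_diagm)
  have weight_zero: "cnj (d t k) * d t l = 1" if "t \<in> torus" and "Y i $ (k, l) \<noteq> 0" for t i k l
  proof -
    have "k = l" using that(2) by (simp add: Y_def axis_def split: if_splits)
    then show ?thesis
      using complex_norm_square[of "d t k"] unitary[OF that(1)] by (simp add: mult.commute)
  qed
  have "card (range Y) \<le> vec.dim (zero_weight_space tor (\<lambda>g. tensor_act (conj_mat (rho g)) (rho g)) UNIV)"
    by (rule card_range_le_dim_zero_weight_space[where tor = tor and rho = "\<lambda>g. conj_mat (rho g)",
          OF conj_QP QP conj_rho rho weight_zero])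
      (auto simp: Y_def axis_def vec_eq_iff split: if_splits)
  moreover have "inj Y"
    by (rule injI) (simp add: Y_def axis_eq_axis)
  ultimately show ?thesis by (simp add: card_image)
qed

lemma diagm_mult_nth: "(diagm a ** M)$i$j = a i * M$i$j"
  by (simp add: diagm_def matrix_matrix_mult_def if_distrib if_distribR cong: if_cong)

lemma mult_diagm_nth: "(M ** diagm b)$i$j = M$i$j * b j"
  by (simp add: diagm_def matrix_matrix_mult_def if_distrib if_distribR cong: if_cong)

lemma transpose_diagm: "transpose (diagm d) = diagm d"
  by (simp add: transpose_def diagm_def vec_eq_iff)

lemma invariant_form_weights:
  fixes P Q B :: "complex^'n::finite^'n"
  assumes QP: "Q ** P = mat 1"
    and inv: "transpose (P ** diagm d ** Q) ** B ** (P ** diagm d ** Q) = B"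
  shows "d k * d l * (transpose P ** B ** P)$k$l = (transpose P ** B ** P)$k$l"
proof -
  let ?D = "diagm d" and ?C = "transpose P ** B ** P"
  have PQ_transpose: "transpose P ** transpose Q = mat 1"
    by (metis QP matrix_transpose_mul transpose_mat)
  have "?C = transpose P ** (transpose (P ** ?D ** Q) ** B ** (P ** ?D ** Q)) ** P"
    by (simp only: inv)
  also have "\<dots> = (transpose P ** transpose Q) ** ?D ** ?C ** ?D ** (Q ** P)"
    by (simp only: matrix_transpose_mul transpose_diagm matrix_mul_assoc)
  also have "\<dots> = ?D ** ?C ** ?D"
    by (simp only: PQ_transpose QP matrix_mul_lid matrix_mul_rid)
  finally have "?C$k$l = (?D ** ?C ** ?D)$k$l"
    by (rule arg_cong)
  then show ?thesis
    by (simp add: diagm_mult_nth mult_diagm_nth mult_ac)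
qed

lemma invertible_transpose:
  fixes A :: "'a::comm_semiring_1^'n::finite^'n"
  assumes "invertible A"
  shows "invertible (transpose A)"
  using assms unfolding invertible_def by (metis matrix_transpose_mul transpose_mat)

lemma invertible_row_nonzero:
  fixes C :: "'a::field^'n::finite^'n"
  assumes "invertible C"
  shows "\<exists>j. C$i$j \<noteq> 0"
proof (rule ccontr)
  assume "\<nexists>j. C$i$j \<noteq> 0"
  then have "(C ** C')$i$i = 0" for C'
    by (simp add: matrix_matrix_mult_def)
  moreover obtain C' where "C ** C' = mat 1"
    using assms invertible_def by blast
  then have "(C ** C')$i$i = 1"
    by (simp add: mat_def)
  ultimately show False
    by simp
qed

lemma card_le_twice_card_range:
  fixes g :: "'a::finite \<Rightarrow> 'b"
  assumes fibres: "\<And>i j. g i = g j \<Longrightarrow> j = i \<or> j = f i"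
  shows "CARD('a) \<le> 2 * card (range g)"
proof -
  let ?h = "\<lambda>i. (g i, i = inv_into UNIV g (g i))"
  have "inj ?h"
  proof (rule injI)
    fix i j
    assume "?h i = ?h j"
    then have g_eq: "g i = g j"
      by simp
    have same_side: "i = inv_into UNIV g (g i) \<longleftrightarrow> j = inv_into UNIV g (g i)"
      using \<open>?h i = ?h j\<close> g_eq by simp
    have "g (inv_into UNIV g (g i)) = g i"
      by (simp add: f_inv_into_f)
    then have "inv_into UNIV g (g i) = i \<or> inv_into UNIV g (g i) = f i"
      using fibres by metis
    moreover have "j = i \<or> j = f i"
      using fibres g_eq by blast
    ultimately show "i = j"
      using same_side by auto
  qed
  then have "CARD('a) \<le> card (range g \<times> (UNIV :: bool set))"
    by (intro card_inj_on_le) auto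
  then show ?thesis
    by (simp add: card_cartesian_product)
qed

lemma transpose_mult_mult_nth_sym:
  fixes P B :: "'a::comm_semiring_1^'n::finite^'n"
  assumes B_sym: "\<And>i j. B$i$j = s * B$j$i"
  shows "(transpose P ** B ** P)$k$l = s * (transpose P ** B ** P)$l$k"
proof -
  have "s * (transpose P ** B ** P)$l$k = (\<Sum>b\<in>UNIV. \<Sum>a\<in>UNIV. P$a$l * (s * B$a$b) * P$b$k)"
    by (simp add: matrix_matrix_mult_def transpose_def sum_distrib_left sum_distrib_right mult_ac)
  also have "\<dots> = (\<Sum>b\<in>UNIV. \<Sum>a\<in>UNIV. P$a$l * B$b$a * P$b$k)"
    by (simp only: B_sym[symmetric])
  also have "\<dots> = (transpose P ** B ** P)$k$l"
    by (subst sum.swap)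
      (simp add: matrix_matrix_mult_def transpose_def sum_distrib_left sum_distrib_right mult_ac)
  finally show ?thesis ..
qed

lemma card_le_twice_dim_zero_weight_tensor_square_of_form:
  fixes tor :: "('r::finite \<Rightarrow> complex) \<Rightarrow> 'h" and rho :: "'h \<Rightarrow> complex^'n::finite^'n"
    and P Q C :: "complex^'n^'n"
  assumes QP: "Q ** P = mat 1"
    and rho: "\<And>t. t \<in> torus \<Longrightarrow> rho (tor t) = P ** diagm (d t) ** Q"
    and C: "invertible C" and C_sym: "\<And>k l. C$k$l = s * C$l$k"
    and C_weights: "\<And>t k l. t \<in> torus \<Longrightarrow> C$k$l \<noteq> 0 \<Longrightarrow> d t k * d t l = 1"
  shows "CARD('n) \<le> 2 * vec.dim (zero_weight_space tor (\<lambda>g. tensor_act (rho g) (rho g))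
           {X. \<forall>i j. X$(i, j) = s * X$(j, i)})"
proof -
  obtain f where f: "\<And>i. C$i$(f i) \<noteq> 0"
    using invertible_row_nonzero[OF C] by metis
  define M where "M i = {(i, f i), (f i, i)}" for i
  define Y where "Y i = (\<chi> p. if p \<in> M i then C$fst p$snd p else 0)" for i
  have Y_support: "p \<in> M i" if "Y i $ p \<noteq> 0" for i p
    using that by (simp add: Y_def split: if_splits)
  have weights: "d t k * d t l = 1" if "t \<in> torus" and "Y i $ (k, l) \<noteq> 0" for i k l t
    using that by (intro C_weights) (simp_all add: Y_def split: if_splits)
  have Y_diag: "Y i $ (i, f i) \<noteq> 0" for i
    using f by (simp add: Y_def M_def)
  then have nonzero: "Y i \<noteq> 0" for i
    by (metis zero_index)
  have disjoint: "Y i = Y j" if "Y i $ p \<noteq> 0" and "Y j $ p \<noteq> 0" for i j p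
  proof -
    have "M i = M j"
      using Y_support[OF that(1)] Y_support[OF that(2)] by (auto simp: M_def)
    then show ?thesis by (simp add: Y_def)
  qed
  have in_V: "tensor_act P P (Y i) \<in> {X. \<forall>i j. X$(i, j) = s * X$(j, i)}" for i
  proof -
    have M_sym: "(l, k) \<in> M i \<longleftrightarrow> (k, l) \<in> M i" for k l
      by (auto simp: M_def)
    have "Y i $ (k, l) = s * Y i $ (l, k)" for k l
      using C_sym[of k l] by (simp add: Y_def M_sym)
    then show ?thesis
      using tensor_act_swap by blast
  qed
  have "card (range Y) \<le> vec.dim (zero_weight_space tor (\<lambda>g. tensor_act (rho g) (rho g))
           {X. \<forall>i j. X$(i, j) = s * X$(j, i)})"
    by (rule card_range_le_dim_zero_weight_space[where tor = tor and rho = rho and rho' = rho,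
          OF QP QP rho rho weights nonzero disjoint in_V])
  moreover have "CARD('n) \<le> 2 * card (range Y)"
  proof (rule card_le_twice_card_range)
    fix i j
    assume "Y i = Y j"
    then have "(j, f j) \<in> M i"
      using Y_diag[of j] by (intro Y_support) simp
    then show "j = i \<or> j = f i"
      by (auto simp: M_def)
  qed
  ultimately show ?thesis by simp
qed

lemma card_le_twice_dim_zero_weight_tensor_square:
  fixes tor :: "('r::finite \<Rightarrow> complex) \<Rightarrow> 'h" and rho :: "'h \<Rightarrow> complex^'n::finite^'n"
    and P Q B :: "complex^'n^'n"
  assumes QP: "Q ** P = mat 1"
    and rho: "\<And>t. t \<in> torus \<Longrightarrow> rho (tor t) = P ** diagm (d t) ** Q"
    and B: "invertible B" and B_sym: "\<And>i j. B$i$j = s * B$j$i"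
    and B_inv: "\<And>t. t \<in> torus \<Longrightarrow> transpose (rho (tor t)) ** B ** rho (tor t) = B"
  shows "CARD('n) \<le> 2 * vec.dim (zero_weight_space tor (\<lambda>g. tensor_act (rho g) (rho g))
           {X. \<forall>i j. X$(i, j) = s * X$(j, i)})"
proof (rule card_le_twice_dim_zero_weight_tensor_square_of_form[where tor = tor and rho = rho,
      OF QP rho _ transpose_mult_mult_nth_sym[OF B_sym]])
  have "invertible P"
    using QP invertible_left_inverse by blast
  then show "invertible (transpose P ** B ** P)"
    using B by (intro invertible_mult invertible_transpose)
  show "d t k * d t l = 1" if "t \<in> torus" and "(transpose P ** B ** P)$k$l \<noteq> 0" for t k l
  proof -
    have "d t k * d t l * (transpose P ** B ** P)$k$l = (transpose P ** B ** P)$k$l"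
      by (rule invariant_form_weights[OF QP]) (use B_inv[OF that(1)] rho[OF that(1)] in simp)
    then show ?thesis
      using that(2) by simp
  qed
qed

lemma matrix_inv_mult_left:
  assumes "invertible A"
  shows "matrix_inv A ** A = mat 1"
  using someI_ex[OF assms[unfolded invertible_def]] by (simp add: matrix_inv_def)

lemma norm_character:
  assumes "t \<in> torus"
  shows "norm (character w t) = 1"
  using assms by (simp add: character_def torus_def prod_norm[symmetric] norm_power_int)

theorem mainTheorem1:
  fixes G :: "('h, 'm) monoid_scheme"
    and tor :: "('r::finite \<Rightarrow> complex) \<Rightarrow> 'h"
    and rho :: "'h \<Rightarrow> complex^'n::finite^'n"
  assumes "group G"
    and "torus_in_group G tor"
    and "is_rep G rho"
    and "weight_decomposable tor rho"
  shows "vec.dim (zero_weight_space tor (\<lambda>g. tensor_act (conj_mat (rho g)) (rho g)) UNIV)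
           \<ge> CARD('n)
       \<and> (quaternionic_rep G rho \<longrightarrow>
           2 * vec.dim (zero_weight_space tor (\<lambda>g. tensor_act (rho g) (rho g)) alt_tensors)
           \<ge> CARD('n))
       \<and> (real_rep G rho \<longrightarrow>
           2 * vec.dim (zero_weight_space tor (\<lambda>g. tensor_act (rho g) (rho g)) sym_tensors)
           \<ge> CARD('n))"
proof -
  \<comment> \<open>Only the torus action and the invariance of the form enter.\<close>
  obtain P and wt :: "'n \<Rightarrow> 'r \<Rightarrow> int" where P: "invertible P"
    and rho_torus: "\<And>t. t \<in> torus \<Longrightarrow>
      rho (tor t) = P ** diagm (\<lambda>k. character (wt k) t) ** matrix_inv P"
    using assms(4) unfolding weight_decomposable_def by blast
  note QP = matrix_inv_mult_left[OF P]
  have torus_carrier: "\<And>t. t \<in> torus \<Longrightarrow> tor t \<in> carrier G"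
    using assms(2) by (auto simp: torus_in_group_def)
  show ?thesis
  proof (intro conjI impI)
    show "vec.dim (zero_weight_space tor (\<lambda>g. tensor_act (conj_mat (rho g)) (rho g)) UNIV) \<ge> CARD('n)"
      by (rule card_le_dim_zero_weight_conj_tensor[where tor = tor and rho = rho,
            OF QP rho_torus norm_character])
  next
    assume "quaternionic_rep G rho"
    then obtain B where B: "invertible B" and B_alt: "transpose B = - B"
      and B_inv: "\<forall>g\<in>carrier G. transpose (rho g) ** B ** rho g = B"
      unfolding quaternionic_rep_def by blast
    have "B$i$j = -1 * B$j$i" for i j
      using arg_cong[OF B_alt, of "\<lambda>M. M$j$i"] by (simp add: transpose_def)
    from card_le_twice_dim_zero_weight_tensor_square[where tor = tor and rho = rho,
        OF QP rho_torus B this] B_inv torus_carrier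
    show "2 * vec.dim (zero_weight_space tor (\<lambda>g. tensor_act (rho g) (rho g)) alt_tensors) \<ge> CARD('n)"
      by (simp add: alt_tensors_def)
  next
    assume "real_rep G rho"
    then obtain B where B: "invertible B" and B_sym: "transpose B = B"
      and B_inv: "\<forall>g\<in>carrier G. transpose (rho g) ** B ** rho g = B"
      unfolding real_rep_def by blast
    have "B$i$j = 1 * B$j$i" for i j
      using arg_cong[OF B_sym, of "\<lambda>M. M$j$i"] by (simp add: transpose_def)
    from card_le_twice_dim_zero_weight_tensor_square[where tor = tor and rho = rho,
        OF QP rho_torus B this] B_inv torus_carrier
    show "2 * vec.dim (zero_weight_space tor (\<lambda>g. tensor_act (rho g) (rho g)) sym_tensors) \<ge> CARD('n)"
      by (simp add: sym_tensors_def)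
  qed
qed

end
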